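(* Let $d\ge1$, let $k$ be an integer with $1\le k\le d$, let $\gamma=(\gamma_1,\dots,\gamma_{d-k+1})\in\mathbb R^{d-k+1}$ with $\gamma_i>-1$ for all $i$, and let $\mathbf m\in\mathbb N^k$ (positive integers). Put $\boldsymbol\gamma=(\gamma,-\mathbf m)\in\mathbb R^{d+1}$. Then for every $\mathbf n\in\mathbb N_0^d$, $$\int_{T^d}P_{\mathbf n}^{(\gamma,-\mathbf m)}(x)\,Q(x)\,x_1^{\gamma_1}\cdots x_{d-k+1}^{\gamma_{d-k+1}}\,dx=0\qquad\text{for all }Q\in\Pi^d_{|\mathbf n|-|\mathbf m|-1}.$$
   Context: $T^d=\{x\in\mathbb R^d:x_1\ge0,\dots,x_d\ge0,\ 1-|x|\ge0\}$ with $|x|=x_1+\dots+x_d$; $\Pi^d_m$ is the space of real polynomials in $d$ variables of total degree at most $m$; $|\mathbf m|$ is the sum of the entries of $\mathbf m$. For $\boldsymbol\gamma=(\gamma_1,\dots,\gamma_{d+1})\in\mathbb R^{d+1}$ and $\mathbf n\in\mathbb N_0^d$, the Rodrigues function is $P_{\mathbf n}^{\boldsymbol\gamma}(x)=x_1^{-\gamma_1}\cdots x_d^{-\gamma_d}(1-|x|)^{-\gamma_{d+1}}\frac{\partial^{|\mathbf n|}}{\partial x_1^{n_1}\cdots\partial x_d^{n_d}}\Big[x_1^{\gamma_1+n_1}\cdots x_d^{\gamma_d+n_d}(1-|x|)^{\gamma_{d+1}+|\mathbf n|}\Big]$ on the interior of $T^d$. *)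

theory Defs
  imports "HOL-Analysis.Analysis" "HOL-Probability.Probability"
begin

text \<open>Points of R^d are functions nat => real, coordinates 0..d-1 (paper's x_1..x_d).\<close>

definition abs_pt :: "nat \<Rightarrow> (nat \<Rightarrow> real) \<Rightarrow> real" where
  "abs_pt d x = (\<Sum>i<d. x i)"

definition std_simplex :: "nat \<Rightarrow> (nat \<Rightarrow> real) set" where
  "std_simplex d = {x. (\<forall>i<d. 0 \<le> x i) \<and> 0 \<le> 1 - abs_pt d x}"

abbreviation lebesgue_d :: "nat \<Rightarrow> (nat \<Rightarrow> real) measure" where
  "lebesgue_d d \<equiv> PiM {..<d} (\<lambda>_. lborel)"

text \<open>Polynomials in d variables of total degree at most M (M an integer; empty index set,
  i.e. only the zero polynomial, when M < 0).\<close>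
definition poly_space :: "nat \<Rightarrow> int \<Rightarrow> ((nat \<Rightarrow> real) \<Rightarrow> real) set" where
  "poly_space d M = {q. \<exists>c :: (nat \<Rightarrow> nat) \<Rightarrow> real.
      q = (\<lambda>x. \<Sum>\<alpha>\<in>{\<alpha>. (\<forall>i. d \<le> i \<longrightarrow> \<alpha> i = 0) \<and> int (\<Sum>i<d. \<alpha> i) \<le> M}.
                  c \<alpha> * (\<Prod>i<d. x i ^ \<alpha> i))}"

definition partial :: "nat \<Rightarrow> ((nat \<Rightarrow> real) \<Rightarrow> real) \<Rightarrow> (nat \<Rightarrow> real) \<Rightarrow> real" where
  "partial i f = (\<lambda>x. deriv (\<lambda>t. f (x(i := t))) (x i))"

definition iter_partial :: "nat \<Rightarrow> (nat \<Rightarrow> nat) \<Rightarrow> ((nat \<Rightarrow> real) \<Rightarrow> real) \<Rightarrow> (nat \<Rightarrow> real) \<Rightarrow> real" where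
  "iter_partial d n f = foldr (\<lambda>i g. (partial i ^^ n i) g) [0..<d] f"

text \<open>Rodrigues function P_n^g (g has entries g 0 .. g d, i.e. gamma_1..gamma_{d+1}),
  meaningful on the interior of T^d.\<close>
definition rodrigues :: "nat \<Rightarrow> (nat \<Rightarrow> real) \<Rightarrow> (nat \<Rightarrow> nat) \<Rightarrow> (nat \<Rightarrow> real) \<Rightarrow> real" where
  "rodrigues d g n x =
     (\<Prod>i<d. x i powr (- g i)) * (1 - abs_pt d x) powr (- g d) *
     iter_partial d n
       (\<lambda>y. (\<Prod>i<d. y i powr (g i + real (n i))) *
            (1 - abs_pt d y) powr (g d + real (\<Sum>i<d. n i))) x"

text \<open>The concatenated parameter (gamma, -m) in R^{d+1}: gamma has entries 0..d-k,
  m has entries 0..k-1.\<close>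
definition concat_param :: "nat \<Rightarrow> nat \<Rightarrow> (nat \<Rightarrow> real) \<Rightarrow> (nat \<Rightarrow> nat) \<Rightarrow> nat \<Rightarrow> real" where
  "concat_param d k \<gamma> m j =
     (if j \<le> d - k then \<gamma> j else - real (m (j - (d - k + 1))))"

end

theory Submission
  imports Defs
begin

text \<open>On the open simplex the integrand is \<open>P_n^(\<gamma>,-m) * x^\<alpha> * weight = R * \<partial>^n F\<close>, where
  \<open>F = x^(\<gamma>+n) (1 - |x|)^(|n| - m_k)\<close> and \<open>R\<close> is a monomial with natural exponents: the weight
  cancels \<open>x^(-\<gamma>)\<close> and the negative parameters \<open>-m\<close> become natural exponents. Both sides are
  finite sums of monomials \<open>c x^e (1 - |x|)^b\<close>, whose integrals are Dirichlet integrals with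
  Gamma-function values. The recurrence \<open>\<Gamma>(z + 1) = z \<Gamma>(z)\<close> shows that the derivative
  of a monomial with both exponents positive integrates to zero, which is integration by parts
  without boundary terms. Moving the \<open>|n|\<close> derivatives from \<open>F\<close> to \<open>R\<close> one at a time only
  meets such terms, and afterwards the derivatives of \<open>R\<close> have degree
  \<open>|\<alpha>| + |m| - |n| < 0\<close>, so they vanish.\<close>

section \<open>Dirichlet integrals\<close>

lemma nn_integral_beta_scaled:
  fixes a c s :: real
  assumes a: "a > -1" and c: "c > -1" and s: "s > 0"
  shows "(\<integral>\<^sup>+y. ennreal (indicator {0<..<s} y * (y powr a * (s - y) powr c)) \<partial>lborel)
         = ennreal (s powr (a + c + 1) * Beta (a + 1) (c + 1))"
proof -
  have "((\<lambda>t. t powr a * (1 - t) powr c) has_integral Beta (a + 1) (c + 1)) {0<..<1}"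
    using has_integral_Beta_real[of "a + 1" "c + 1"] a c by (simp add: has_integral_Icc_iff_Ioo)
  then have beta: "(\<integral>\<^sup>+t. ennreal (indicator {0<..<1} t * (t powr a * (1 - t) powr c)) \<partial>lborel)
      = ennreal (Beta (a + 1) (c + 1))"
    by (intro nn_integral_has_integral_lebesgue) auto
  have "(\<integral>\<^sup>+y. ennreal (indicator {0<..<s} y * (y powr a * (s - y) powr c)) \<partial>lborel)
     = ennreal s * (\<integral>\<^sup>+t. ennreal (indicator {0<..<s} (0 + s * t) * ((0 + s * t) powr a * (s - (0 + s * t)) powr c)) \<partial>lborel)"
    using s by (subst nn_integral_real_affine[where c = s and t = 0]) auto
  also have "(\<integral>\<^sup>+t. ennreal (indicator {0<..<s} (0 + s * t) * ((0 + s * t) powr a * (s - (0 + s * t)) powr c)) \<partial>lborel)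
     = (\<integral>\<^sup>+t. ennreal (s powr (a + c)) * ennreal (indicator {0<..<1} t * (t powr a * (1 - t) powr c)) \<partial>lborel)"
  proof (intro nn_integral_cong)
    fix t :: real
    show "ennreal (indicator {0<..<s} (0 + s * t) * ((0 + s * t) powr a * (s - (0 + s * t)) powr c))
       = ennreal (s powr (a + c)) * ennreal (indicator {0<..<1} t * (t powr a * (1 - t) powr c))"
    proof (cases "t \<in> {0<..<1}")
      case True
      have "s - s * t = s * (1 - t)" by (simp add: algebra_simps)
      moreover have "s * t \<in> {0<..<s}" using True s by auto
      ultimately show ?thesis using True s
        by (simp add: powr_mult powr_add ennreal_mult'[symmetric] mult_ac)
    next
      case False
      then have "s * t \<notin> {0<..<s}" using s
        by (auto simp: mult_less_cancel_left1 zero_less_mult_iff)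
      then show ?thesis using False by simp
    qed
  qed
  also have "\<dots> = ennreal (s powr (a + c)) * ennreal (Beta (a + 1) (c + 1))"
    by (subst nn_integral_cmult) (auto simp: beta)
  finally have "(\<integral>\<^sup>+y. ennreal (indicator {0<..<s} y * (y powr a * (s - y) powr c)) \<partial>lborel)
      = ennreal s * (ennreal (s powr (a + c)) * ennreal (Beta (a + 1) (c + 1)))" .
  moreover have "Beta (a + 1) (c + 1) \<ge> 0" using a c by (simp add: Beta_def)
  ultimately show ?thesis
    using s by (simp add: ennreal_mult[symmetric] powr_add mult_ac)
qed

definition dirichlet_const :: "nat set \<Rightarrow> (nat \<Rightarrow> real) \<Rightarrow> real \<Rightarrow> real" where
  "dirichlet_const A e b =
     (\<Prod>l\<in>A. Gamma (e l + 1)) * Gamma (b + 1) / Gamma ((\<Sum>l\<in>A. e l) + b + real (card A) + 1)"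

definition open_simplex :: "nat set \<Rightarrow> real \<Rightarrow> (nat \<Rightarrow> real) set" where
  "open_simplex A s = {x. (\<forall>l\<in>A. 0 < x l) \<and> (\<Sum>l\<in>A. x l) < s}"

lemma sum_exponents_gt:
  assumes "finite A" "\<forall>l\<in>A. e l > -1" "b > -1"
  shows "(\<Sum>l\<in>A. e l) + b + real (card A) > -1"
proof -
  have "(\<Sum>l\<in>A. e l) \<ge> (\<Sum>l\<in>A. -1)"
    using assms by (intro sum_mono) (auto simp: less_imp_le)
  then show ?thesis using assms by simp
qed

lemma dirichlet_const_nonneg:
  assumes "finite A" "\<forall>l\<in>A. e l > -1" "b > -1"
  shows "dirichlet_const A e b \<ge> 0"
  using sum_exponents_gt[OF assms] assms unfolding dirichlet_const_def
  by (intro divide_nonneg_nonneg mult_nonneg_nonneg prod_nonneg)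
     (auto intro!: Gamma_real_nonneg less_imp_le)

lemma dirichlet_const_insert:
  assumes "finite A" "i \<notin> A" "\<forall>l\<in>A. e l > -1" "b > -1"
  shows "dirichlet_const A e b * Beta (e i + 1) ((\<Sum>l\<in>A. e l) + b + real (card A) + 1)
       = dirichlet_const (insert i A) e b"
proof -
  define C where "C = (\<Sum>l\<in>A. e l) + b + real (card A)"
  have "C > -1" unfolding C_def using assms(1,3,4) by (rule sum_exponents_gt)
  then have "Gamma (C + 1) \<noteq> 0" using Gamma_real_pos[of "C + 1"] by force
  then show ?thesis
    using assms(1,2) unfolding dirichlet_const_def Beta_def C_def[symmetric]
    by (simp add: C_def field_simps)
qed

definition dirichlet_density :: "nat set \<Rightarrow> (nat \<Rightarrow> real) \<Rightarrow> real \<Rightarrow> real \<Rightarrow> (nat \<Rightarrow> real) \<Rightarrow> real" where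
  "dirichlet_density A e b s x =
     indicator (open_simplex A s) x * ((\<Prod>l\<in>A. x l powr e l) * (s - (\<Sum>l\<in>A. x l)) powr b)"

lemma dirichlet_density_nonneg: "dirichlet_density A e b s x \<ge> 0"
  by (auto simp: dirichlet_density_def indicator_def intro!: mult_nonneg_nonneg prod_nonneg)

lemma borel_measurable_dirichlet_density [measurable]:
  "finite A \<Longrightarrow> dirichlet_density A e b s \<in> borel_measurable (PiM A (\<lambda>_. lborel))"
  unfolding dirichlet_density_def open_simplex_def by measurable

lemma dirichlet_density_insert:
  assumes "finite A" "i \<notin> A"
  shows "dirichlet_density (insert i A) e b s (x(i := y))
       = (indicator {0<..<s} y * y powr e i) * dirichlet_density A e b (s - y) x"
proof -
  have "(\<Prod>l\<in>A. (x(i := y)) l powr e l) = (\<Prod>l\<in>A. x l powr e l)"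
    and "(\<Sum>l\<in>A. (x(i := y)) l) = (\<Sum>l\<in>A. x l)"
    using assms(2) by (auto intro!: prod.cong sum.cong)
  then have prod: "(\<Prod>l\<in>insert i A. (x(i := y)) l powr e l) = y powr e i * (\<Prod>l\<in>A. x l powr e l)"
    and sum: "(\<Sum>l\<in>insert i A. (x(i := y)) l) = y + (\<Sum>l\<in>A. x l)"
    using assms by simp_all
  have "(\<forall>l\<in>A. 0 < x l) \<Longrightarrow> (\<Sum>l\<in>A. x l) \<ge> 0"
    by (intro sum_nonneg) (auto simp: less_imp_le)
  then have "indicator (open_simplex (insert i A) s) (x(i := y))
      = (indicator {0<..<s} y * indicator (open_simplex A (s - y)) x :: real)"
    using assms sum by (auto simp: indicator_def open_simplex_def)
  then show ?thesis unfolding dirichlet_density_def prod sum by (simp add: diff_diff_eq mult_ac)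
qed

lemma nn_integral_dirichlet:
  assumes "finite A" "\<forall>l\<in>A. e l > -1" "b > -1" "s > 0"
  shows "(\<integral>\<^sup>+x. ennreal (dirichlet_density A e b s x) \<partial>PiM A (\<lambda>_. lborel))
       = ennreal (dirichlet_const A e b * s powr ((\<Sum>l\<in>A. e l) + b + real (card A)))"
  using assms
proof (induction A arbitrary: s rule: finite_induct)
  case empty
  then have "Gamma (b + 1) \<noteq> 0" using Gamma_real_pos[of "b + 1"] by force
  then show ?case
    using empty
    by (simp add: PiM_empty dirichlet_const_def dirichlet_density_def open_simplex_def
        nn_integral_count_space_finite)
next
  case (insert i A s)
  interpret product_sigma_finite "\<lambda>_. lborel" by standard
  define C where "C = (\<Sum>l\<in>A. e l) + b + real (card A)"
  define D where "D = dirichlet_const A e b"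
  have eA: "\<forall>l\<in>A. e l > -1" and ei: "e i > -1" using insert by auto
  have C: "C > -1" unfolding C_def using sum_exponents_gt insert eA by blast
  have D: "D \<ge> 0" unfolding D_def using dirichlet_const_nonneg insert eA by blast
  have "(\<integral>\<^sup>+x. ennreal (indicator {0<..<s} y * y powr e i) * ennreal (dirichlet_density A e b (s - y) x)
          \<partial>PiM A (\<lambda>_. lborel))
      = ennreal (indicator {0<..<s} y * y powr e i) * ennreal (D * (s - y) powr C)" for y
  proof (cases "y \<in> {0<..<s}")
    case True
    then show ?thesis
      using insert.IH[of "s - y"] eA insert.prems insert.hyps
      by (subst nn_integral_cmult) (simp_all add: C_def D_def)
  qed simp
  then have "(\<integral>\<^sup>+x. ennreal (dirichlet_density (insert i A) e b s x) \<partial>PiM (insert i A) (\<lambda>_. lborel))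
      = (\<integral>\<^sup>+y. ennreal (indicator {0<..<s} y * y powr e i) * ennreal (D * (s - y) powr C) \<partial>lborel)"
    using insert.hyps
    by (simp add: product_nn_integral_insert_rev dirichlet_density_insert ennreal_mult')
  also have "\<dots> = (\<integral>\<^sup>+y. ennreal D * ennreal (indicator {0<..<s} y * (y powr e i * (s - y) powr C)) \<partial>lborel)"
    by (intro nn_integral_cong) (auto simp: ennreal_mult[symmetric] D indicator_def mult_ac)
  also have "\<dots> = ennreal D * ennreal (s powr (e i + C + 1) * Beta (e i + 1) (C + 1))"
    using nn_integral_beta_scaled[OF ei C insert.prems(3)] by (subst nn_integral_cmult) auto
  also have "\<dots> = ennreal (D * Beta (e i + 1) (C + 1) * s powr (e i + C + 1))"
  proof -
    have "Beta (e i + 1) (C + 1) \<ge> 0" using ei C by (simp add: Beta_def)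
    then show ?thesis using D by (simp add: ennreal_mult mult_ac)
  qed
  also have "\<dots> = ennreal (dirichlet_const (insert i A) e b
                      * s powr ((\<Sum>l\<in>insert i A. e l) + b + real (card (insert i A))))"
    using dirichlet_const_insert[OF insert.hyps eA insert.prems(2)] insert.hyps
    by (simp add: C_def D_def add_ac)
  finally show ?case .
qed


section \<open>Symbolic Dirichlet monomials\<close>

text \<open>A triple \<open>(c, e, b)\<close> stands for the monomial \<open>c * (\<Prod>l<d. x l powr e l) * (1 - |x|) powr b\<close>;
  a list of triples stands for their sum.\<close>
type_synonym dmon = "real \<times> (nat \<Rightarrow> real) \<times> real"

fun dmon_eval :: "nat \<Rightarrow> dmon \<Rightarrow> (nat \<Rightarrow> real) \<Rightarrow> real" where
  "dmon_eval d (c, e, b) x = c * ((\<Prod>l<d. x l powr e l) * (1 - abs_pt d x) powr b)"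

definition dmons_eval :: "nat \<Rightarrow> dmon list \<Rightarrow> (nat \<Rightarrow> real) \<Rightarrow> real" where
  "dmons_eval d T x = (\<Sum>t\<leftarrow>T. dmon_eval d t x)"

fun dmon_deriv :: "nat \<Rightarrow> dmon \<Rightarrow> dmon list" where
  "dmon_deriv i (c, e, b) = [(c * e i, e(i := e i - 1), b), (- (c * b), e, b - 1)]"

definition dmons_deriv :: "nat \<Rightarrow> dmon list \<Rightarrow> dmon list" where
  "dmons_deriv i T = concat (map (dmon_deriv i) T)"

definition dmons_derivs :: "nat list \<Rightarrow> dmon list \<Rightarrow> dmon list" where
  "dmons_derivs is T = foldr dmons_deriv is T"

fun dmon_mult :: "dmon \<Rightarrow> dmon \<Rightarrow> dmon" where
  "dmon_mult (c1, e1, b1) (c2, e2, b2) = (c1 * c2, \<lambda>l. e1 l + e2 l, b1 + b2)"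

definition dmons_mult :: "dmon list \<Rightarrow> dmon list \<Rightarrow> dmon list" where
  "dmons_mult R T = concat (map (\<lambda>r. map (dmon_mult r) T) R)"

fun dmon_integral :: "nat \<Rightarrow> dmon \<Rightarrow> real" where
  "dmon_integral d (c, e, b) = c * dirichlet_const {..<d} e b"

definition dmons_integral :: "nat \<Rightarrow> dmon list \<Rightarrow> real" where
  "dmons_integral d T = (\<Sum>t\<leftarrow>T. dmon_integral d t)"

fun dmon_degree :: "nat \<Rightarrow> dmon \<Rightarrow> real" where
  "dmon_degree d (c, e, b) = (\<Sum>l<d. e l) + b"

definition natural_dmons :: "nat \<Rightarrow> dmon list \<Rightarrow> bool" where
  "natural_dmons d T \<longleftrightarrow> (\<forall>(c, e, b)\<in>set T. c \<noteq> 0 \<longrightarrow> (\<forall>l<d. e l \<in> \<nat>) \<and> b \<in> \<nat>)"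

lemma dmons_eval_Nil [simp]: "dmons_eval d [] x = 0"
  and dmons_eval_Cons [simp]: "dmons_eval d (t # T) x = dmon_eval d t x + dmons_eval d T x"
  by (simp_all add: dmons_eval_def)

lemma dmons_eval_mult_single: "dmons_eval d (dmons_mult [r] T) x = dmon_eval d r x * dmons_eval d T x"
proof (induction T)
  case (Cons t T)
  obtain c1 e1 b1 where "r = (c1, e1, b1)" by (cases r)
  moreover obtain c2 e2 b2 where "t = (c2, e2, b2)" by (cases t)
  ultimately show ?case
    using Cons by (simp add: dmons_mult_def powr_add prod.distrib algebra_simps)
qed (simp add: dmons_mult_def)

lemma sum_list_map_concat: "(\<Sum>t\<leftarrow>concat xss. f t) = (\<Sum>xs\<leftarrow>xss. \<Sum>t\<leftarrow>xs. f t)"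
  by (induction xss) auto

lemma dmons_integral_Nil [simp]: "dmons_integral d [] = 0"
  and dmons_integral_Cons [simp]: "dmons_integral d (t # T) = dmon_integral d t + dmons_integral d T"
  by (simp_all add: dmons_integral_def)

lemma dmons_integral_concat: "dmons_integral d (concat Ts) = (\<Sum>T\<leftarrow>Ts. dmons_integral d T)"
  by (induction Ts) (simp_all add: dmons_integral_def)

lemma dmons_integral_deriv: "dmons_integral d (dmons_deriv i T) = (\<Sum>t\<leftarrow>T. dmons_integral d (dmon_deriv i t))"
  by (simp add: dmons_deriv_def dmons_integral_concat o_def)

lemma dmons_integral_mult:
  "dmons_integral d (dmons_mult R T) = (\<Sum>r\<leftarrow>R. \<Sum>t\<leftarrow>T. dmon_integral d (dmon_mult r t))"
  unfolding dmons_mult_def dmons_integral_concat by (simp add: dmons_integral_def o_def)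

lemma dmons_derivs_Nil [simp]: "dmons_derivs [] T = T"
  and dmons_derivs_Cons [simp]: "dmons_derivs (i # is) T = dmons_deriv i (dmons_derivs is T)"
  by (simp_all add: dmons_derivs_def)

lemma set_dmons_deriv: "t \<in> set (dmons_deriv i T) \<longleftrightarrow> (\<exists>t0\<in>set T. t \<in> set (dmon_deriv i t0))"
  by (auto simp: dmons_deriv_def)

lemma set_dmons_mult: "t \<in> set (dmons_mult R T) \<longleftrightarrow> (\<exists>r\<in>set R. \<exists>u\<in>set T. t = dmon_mult r u)"
  by (auto simp: dmons_mult_def)

text \<open>This is integration by parts against the Dirichlet weight: both boundary terms vanish
  because both exponents are positive.\<close>
lemma dmons_integral_dmon_deriv_eq_0:
  assumes "i < d" "e i > 0" "b > 0"
  shows "dmons_integral d (dmon_deriv i (c, e, b)) = 0"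
proof -
  let ?P = "\<Prod>l\<in>{..<d}-{i}. Gamma (e l + 1)"
  have "(\<Prod>l<d. Gamma (e l + 1)) = Gamma (e i + 1) * ?P"
    and "(\<Prod>l<d. Gamma ((e(i := e i - 1)) l + 1)) = Gamma (e i) * ?P"
    and "(\<Sum>l<d. (e(i := e i - 1)) l) = (\<Sum>l<d. e l) - 1"
    using assms by (simp_all add: prod.remove[of _ i] sum.remove[of _ i])
  moreover have "Gamma (e i + 1) = e i * Gamma (e i)"
    using assms by (intro Gamma_plus1) (auto elim!: nonpos_Ints_cases)
  moreover have "Gamma (b - 1 + 1) * b = Gamma (b + 1)"
    using Gamma_plus1[of b] assms nonpos_Ints_nonpos[of b] by force
  ultimately show ?thesis
    by (simp only: dmon_deriv.simps dmons_integral_Cons dmons_integral_Nil dmon_integral.simps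
        dirichlet_const_def) (simp add: field_simps)
qed

lemma dmon_integral_deriv_mult:
  "dmons_integral d (dmon_deriv i (dmon_mult r t))
     = (\<Sum>r'\<leftarrow>dmon_deriv i r. dmon_integral d (dmon_mult r' t))
       + (\<Sum>t'\<leftarrow>dmon_deriv i t. dmon_integral d (dmon_mult r t'))"
proof -
  obtain c1 e1 b1 where r: "r = (c1, e1, b1)" by (cases r)
  obtain c2 e2 b2 where t: "t = (c2, e2, b2)" by (cases t)
  have "(\<lambda>l. (e1(i := e1 i - 1)) l + e2 l) = (\<lambda>l. e1 l + e2 l)(i := e1 i + e2 i - 1)"
    and "(\<lambda>l. e1 l + (e2(i := e2 i - 1)) l) = (\<lambda>l. e1 l + e2 l)(i := e1 i + e2 i - 1)"
    by (auto simp: fun_eq_iff)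
  then show ?thesis
    unfolding r t by (simp add: algebra_simps)
qed

lemma dmons_integral_deriv_mult:
  "dmons_integral d (dmons_deriv i (dmons_mult R T))
     = dmons_integral d (dmons_mult (dmons_deriv i R) T) + dmons_integral d (dmons_mult R (dmons_deriv i T))"
proof -
  have "dmons_integral d (dmons_deriv i (dmons_mult R T))
      = (\<Sum>r\<leftarrow>R. \<Sum>t\<leftarrow>T. dmons_integral d (dmon_deriv i (dmon_mult r t)))"
    unfolding dmons_integral_deriv dmons_mult_def sum_list_map_concat by (simp add: o_def)
  also have "\<dots> = (\<Sum>r\<leftarrow>R. (\<Sum>r'\<leftarrow>dmon_deriv i r. \<Sum>t\<leftarrow>T. dmon_integral d (dmon_mult r' t))
                         + (\<Sum>t\<leftarrow>T. \<Sum>t'\<leftarrow>dmon_deriv i t. dmon_integral d (dmon_mult r t')))"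
  proof (intro arg_cong[where f = sum_list] map_cong refl)
    fix r :: dmon
    obtain c e b where "r = (c, e, b)" by (cases r)
    then show "(\<Sum>t\<leftarrow>T. dmons_integral d (dmon_deriv i (dmon_mult r t)))
        = (\<Sum>r'\<leftarrow>dmon_deriv i r. \<Sum>t\<leftarrow>T. dmon_integral d (dmon_mult r' t))
          + (\<Sum>t\<leftarrow>T. \<Sum>t'\<leftarrow>dmon_deriv i t. dmon_integral d (dmon_mult r t'))"
      unfolding dmon_integral_deriv_mult by (simp add: sum_list_addf)
  qed
  also have "\<dots> = dmons_integral d (dmons_mult (dmons_deriv i R) T)
                    + dmons_integral d (dmons_mult R (dmons_deriv i T))"
    unfolding dmons_integral_mult dmons_deriv_def sum_list_map_concat by (simp add: sum_list_addf o_def)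
  finally show ?thesis .
qed

lemma dmons_derivs_exponent_bounds:
  assumes "(c, e, b) \<in> set (dmons_derivs is [(c0, a, b0)])"
  shows "(\<forall>l. e l \<ge> a l - real (count (mset is) l)) \<and> b \<ge> b0 - real (length is)"
  using assms
proof (induction "is" arbitrary: c e b)
  case (Cons i "is")
  then obtain c' e' b' where t0: "(c', e', b') \<in> set (dmons_derivs is [(c0, a, b0)])"
    and "(c, e, b) \<in> set (dmon_deriv i (c', e', b'))"
    by (auto simp: set_dmons_deriv)
  then have step: "e l \<ge> e' l - (if l = i then 1 else 0)" "b \<ge> b' - 1" for l by auto
  note IH = Cons.IH[OF t0]
  show ?case
  proof (intro conjI allI)
    fix l
    show "e l \<ge> a l - real (count (mset (i # is)) l)"
      using IH[THEN conjunct1, rule_format, of l] step(1)[of l] by (cases "l = i") auto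
  next
    show "b \<ge> b0 - real (length (i # is))" using IH step(2) by auto
  qed
qed simp

lemma Nats_nonneg: "(x :: real) \<in> \<nat> \<Longrightarrow> 0 \<le> x"
  by (auto elim!: Nats_cases)

lemma Nats_diff_1: "(x :: real) \<in> \<nat> \<Longrightarrow> x \<noteq> 0 \<Longrightarrow> x - 1 \<in> \<nat>"
  by (auto elim!: Nats_cases simp: of_nat_diff[symmetric] simp del: of_nat_diff)

text \<open>A vanishing exponent kills its own derivative term, so exponents never leave \<open>\<nat>\<close>.\<close>
lemma natural_dmons_deriv:
  assumes "i < d" "natural_dmons d T"
  shows "natural_dmons d (dmons_deriv i T)"
  unfolding natural_dmons_def
proof (clarify)
  fix c e b assume "(c, e, b) \<in> set (dmons_deriv i T)" "c \<noteq> 0"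
  then obtain c' e' b' where "(c', e', b') \<in> set T" and t: "(c, e, b) \<in> set (dmon_deriv i (c', e', b'))"
    by (auto simp: set_dmons_deriv)
  with assms(2) \<open>c \<noteq> 0\<close> have "(\<forall>l<d. e' l \<in> \<nat>) \<and> b' \<in> \<nat>" "c' \<noteq> 0"
    unfolding natural_dmons_def using t by auto
  with t \<open>c \<noteq> 0\<close> assms(1) show "(\<forall>l<d. e l \<in> \<nat>) \<and> b \<in> \<nat>"
    using Nats_diff_1[of "e' i"] Nats_diff_1[of b'] by auto
qed

lemma natural_dmons_derivs:
  "set is \<subseteq> {..<d} \<Longrightarrow> natural_dmons d T \<Longrightarrow> natural_dmons d (dmons_derivs is T)"
  by (induction "is") (auto intro: natural_dmons_deriv)

lemma dmon_degree_derivs: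
  assumes "set is \<subseteq> {..<d}" "t \<in> set (dmons_derivs is [t0])"
  shows "dmon_degree d t = dmon_degree d t0 - real (length is)"
  using assms
proof (induction "is" arbitrary: t)
  case (Cons i "is")
  then obtain c e b where t0: "(c, e, b) \<in> set (dmons_derivs is [t0])"
    and "t \<in> set (dmon_deriv i (c, e, b))" and "i < d"
    by (auto simp: set_dmons_deriv)
  moreover have "(\<Sum>l<d. (e(i := e i - 1)) l) = (\<Sum>l<d. e l) - 1"
    using \<open>i < d\<close> by (simp add: sum.remove[of _ i])
  ultimately show ?case using Cons.IH[OF _ t0] Cons.prems(1) by auto
qed simp

lemma dmons_integral_eq_0_if_coeffs_0:
  assumes "\<forall>(c, e, b)\<in>set R. c = 0"
  shows "dmons_integral d (dmons_mult R T) = 0"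
proof -
  have "dmon_integral d (dmon_mult r t) = 0" if "r \<in> set R" for r t
    using assms that by (cases r, cases t) auto
  then show ?thesis unfolding dmons_integral_mult by (simp cong: map_cong)
qed

lemma dmons_derivs_coeff_eq_0_if_degree_lt:
  assumes "set rs \<subseteq> {..<d}" "\<forall>l<d. \<rho> l \<in> \<nat>" "M \<in> \<nat>"
    and "(\<Sum>l<d. \<rho> l) + M < real (length rs)"
    and t: "(c, e, b) \<in> set (dmons_derivs rs [(1, \<rho>, M)])"
  shows "c = 0"
proof (rule ccontr)
  assume "c \<noteq> 0"
  moreover have "natural_dmons d [(1, \<rho>, M)]" using assms(2,3) by (simp add: natural_dmons_def)
  ultimately have "(\<forall>l<d. e l \<in> \<nat>) \<and> b \<in> \<nat>"
    using natural_dmons_derivs[OF assms(1)] t unfolding natural_dmons_def by blast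
  then have "0 \<le> (\<Sum>l<d. e l)" "0 \<le> b" by (auto intro!: sum_nonneg intro: Nats_nonneg)
  moreover have "dmon_degree d (c, e, b) = (\<Sum>l<d. \<rho> l) + M - real (length rs)"
    using dmon_degree_derivs[OF assms(1) t] by simp
  ultimately show False using assms(4) by simp
qed

text \<open>One integration by parts: every term of the derivative has both exponents positive,
  because the derivatives still to be taken leave enough room in the exponents.\<close>
lemma dmons_integral_deriv_mult_derivs_eq_0:
  fixes g \<rho> :: "nat \<Rightarrow> real" and M :: real and n :: "nat \<Rightarrow> nat"
  assumes g: "g i > -1 \<or> \<rho> i + g i \<ge> 0" and M: "M + g d \<ge> 0"
    and nat: "\<forall>l<d. \<rho> l \<in> \<nat>" "M \<in> \<nat>"
    and i: "i < d" and rs: "set rs \<subseteq> {..<d}"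
    and count: "count (mset rs) i + count (mset is) i < n i"
    and length: "length rs + length is < (\<Sum>l<d. n l)"
  shows "dmons_integral d (dmons_deriv i (dmons_mult (dmons_derivs rs [(1, \<rho>, M)])
           (dmons_derivs is [(1, \<lambda>l. g l + real (n l), g d + real (\<Sum>l<d. n l))]))) = 0"
proof -
  define R where "R = dmons_derivs rs [(1, \<rho>, M)]"
  define G where "G = dmons_derivs is [(1, \<lambda>l. g l + real (n l), g d + real (\<Sum>l<d. n l))]"
  have "real (count (mset rs) i + count (mset is) i + 1) \<le> real (n i)"
    and "real (length rs + length is + 1) \<le> real (\<Sum>l<d. n l)"
    using count length by (simp_all only: of_nat_le_iff Suc_eq_plus1[symmetric] Suc_le_eq)
  then have count': "real (count (mset rs) i) + real (count (mset is) i) + 1 \<le> real (n i)"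
    and length': "real (length rs) + real (length is) + 1 \<le> real (\<Sum>l<d. n l)"
    by simp_all
  have "dmons_integral d (dmon_deriv i (dmon_mult (c1, e1, b1) (c2, e2, b2))) = 0"
    if r: "(c1, e1, b1) \<in> set R" and u: "(c2, e2, b2) \<in> set G" for c1 e1 b1 c2 e2 b2
  proof (cases "c1 = 0")
    case False
    have "natural_dmons d [(1, \<rho>, M)]" using nat by (simp add: natural_dmons_def)
    then have e1: "e1 i \<ge> 0"
      using natural_dmons_derivs[OF rs] r False i
      unfolding R_def natural_dmons_def by (fastforce intro: Nats_nonneg)
    note r_bounds = dmons_derivs_exponent_bounds[OF r[unfolded R_def]]
      and u_bounds = dmons_derivs_exponent_bounds[OF u[unfolded G_def]]
    have "e1 i + e2 i > 0"
      using e1 g count' r_bounds[THEN conjunct1, rule_format, of i]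
        u_bounds[THEN conjunct1, rule_format, of i] by (elim disjE) linarith+
    moreover have "b1 + b2 > 0"
      using r_bounds[THEN conjunct2] u_bounds[THEN conjunct2] M length' by linarith
    ultimately show ?thesis
      unfolding dmon_mult.simps by (intro dmons_integral_dmon_deriv_eq_0[OF i]) simp_all
  qed simp
  then have "dmons_integral d (dmon_deriv i t) = 0" if "t \<in> set (dmons_mult R G)" for t
    using that unfolding set_dmons_mult by fastforce
  then show ?thesis
    unfolding R_def[symmetric] G_def[symmetric] dmons_integral_deriv by (simp cong: map_cong)
qed

text \<open>All derivatives are moved, one at a time, onto the factor with natural exponents;
  once they are all there, its degree is negative and it vanishes.\<close>
lemma dmons_integral_mult_derivs_eq_0:
  fixes g \<rho> :: "nat \<Rightarrow> real" and M :: real and n :: "nat \<Rightarrow> nat"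
  assumes g: "\<forall>l<d. g l > -1 \<or> \<rho> l + g l \<ge> 0" and M: "M + g d \<ge> 0"
    and nat: "\<forall>l<d. \<rho> l \<in> \<nat>" "M \<in> \<nat>"
    and deg: "(\<Sum>l<d. \<rho> l) + M < real (\<Sum>l<d. n l)"
  shows "set rs \<subseteq> {..<d} \<Longrightarrow> set is \<subseteq> {..<d}
    \<Longrightarrow> \<forall>l<d. count (mset rs) l + count (mset is) l \<le> n l
    \<Longrightarrow> length rs + length is = (\<Sum>l<d. n l)
    \<Longrightarrow> dmons_integral d (dmons_mult (dmons_derivs rs [(1, \<rho>, M)])
          (dmons_derivs is [(1, \<lambda>l. g l + real (n l), g d + real (\<Sum>l<d. n l))])) = 0"
proof (induction "is" arbitrary: rs)
  case Nil
  then show ?case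
    using dmons_derivs_coeff_eq_0_if_degree_lt[OF Nil.prems(1) nat] deg
    by (intro dmons_integral_eq_0_if_coeffs_0) auto
next
  case (Cons i "is")
  define R where "R = dmons_derivs rs [(1, \<rho>, M)]"
  define G where "G = dmons_derivs is [(1, \<lambda>l. g l + real (n l), g d + real (\<Sum>l<d. n l))]"
  have i: "i < d" using Cons.prems(2) by simp
  have "dmons_integral d (dmons_mult (dmons_deriv i R) G) = 0"
    unfolding R_def G_def dmons_derivs_Cons[symmetric]
    using Cons.prems by (intro Cons.IH) auto
  moreover have "dmons_integral d (dmons_deriv i (dmons_mult R G)) = 0"
    unfolding R_def G_def using g M nat i Cons.prems
    by (intro dmons_integral_deriv_mult_derivs_eq_0) auto
  ultimately show ?case
    using dmons_integral_deriv_mult[of d i R G] by (simp add: R_def G_def)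
qed


section \<open>Derivatives and integrals on the open simplex\<close>

lemma abs_pt_update:
  assumes "i < d"
  shows "abs_pt d (x(i := t)) = t + (\<Sum>l\<in>{..<d}-{i}. x l)"
proof -
  have "(\<Sum>l\<in>{..<d}-{i}. (x(i := t)) l) = (\<Sum>l\<in>{..<d}-{i}. x l)" by (rule sum.cong) auto
  then show ?thesis using assms unfolding abs_pt_def by (simp add: sum.remove[of _ i])
qed

lemma has_real_derivative_dmon_eval:
  assumes x: "x \<in> open_simplex {..<d} 1" and i: "i < d"
  shows "((\<lambda>t. dmon_eval d t0 (x(i := t))) has_real_derivative dmons_eval d (dmon_deriv i t0) x) (at (x i))"
proof -
  obtain c e b where t0: "t0 = (c, e, b)" by (cases t0)
  define P where "P = (\<Prod>l\<in>{..<d}-{i}. x l powr e l)"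
  define S where "S = (\<Sum>l\<in>{..<d}-{i}. x l)"
  have abs_x: "abs_pt d x = x i + S"
    using abs_pt_update[OF i, of x "x i"] by (simp add: S_def)
  have pos: "x i > 0" "1 - (x i + S) > 0"
    using x i abs_x by (auto simp: open_simplex_def abs_pt_def)
  have eval_update: "dmon_eval d t0 (x(i := t)) = c * ((t powr e i * P) * (1 - (t + S)) powr b)" for t
  proof -
    have "(\<Prod>l\<in>{..<d}-{i}. (x(i := t)) l powr e l) = P" unfolding P_def by (rule prod.cong) auto
    then show ?thesis
      using i unfolding t0 S_def by (simp add: abs_pt_update[OF i] prod.remove[of _ i])
  qed
  have "(\<Prod>l\<in>{..<d}-{i}. x l powr (e(i := e i - 1)) l) = P" unfolding P_def by (rule prod.cong) auto
  then have "(\<Prod>l<d. x l powr (e(i := e i - 1)) l) = x i powr (e i - 1) * P"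
    and "(\<Prod>l<d. x l powr e l) = x i powr e i * P"
    using i unfolding P_def by (simp_all add: prod.remove[of _ i])
  then have "dmons_eval d (dmon_deriv i t0) x
      = c * ((e i * x i powr (e i - 1) * P) * (1 - (x i + S)) powr b
             + (x i powr e i * P) * (b * (1 - (x i + S)) powr (b - 1) * (-1)))"
    unfolding t0 by (simp add: abs_x algebra_simps)
  moreover have "((\<lambda>t. c * ((t powr e i * P) * (1 - (t + S)) powr b)) has_real_derivative
      c * ((e i * x i powr (e i - 1) * P) * (1 - (x i + S)) powr b
           + (x i powr e i * P) * (b * (1 - (x i + S)) powr (b - 1) * (-1)))) (at (x i))"
    using pos by (auto intro!: derivative_eq_intros)
  ultimately show ?thesis unfolding eval_update by simp
qed

lemma has_real_derivative_dmons_eval: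
  assumes "x \<in> open_simplex {..<d} 1" "i < d"
  shows "((\<lambda>t. dmons_eval d T (x(i := t))) has_real_derivative dmons_eval d (dmons_deriv i T) x) (at (x i))"
proof (induction T)
  case (Cons t T)
  have "dmons_eval d (dmons_deriv i (t # T)) x = dmons_eval d (dmon_deriv i t) x + dmons_eval d (dmons_deriv i T) x"
    by (simp add: dmons_deriv_def dmons_eval_def)
  then show ?case
    unfolding dmons_eval_Cons using DERIV_add[OF has_real_derivative_dmon_eval[OF assms, of t] Cons]
    by (simp only:)
qed (simp add: dmons_deriv_def)

lemma eventually_update_in_open_simplex:
  assumes x: "x \<in> open_simplex {..<d} 1" and i: "i < d"
  shows "eventually (\<lambda>t. x(i := t) \<in> open_simplex {..<d} 1) (nhds (x i))"
proof -
  define S where "S = (\<Sum>l\<in>{..<d}-{i}. x l)"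
  have abs_update: "abs_pt d (x(i := t)) = t + S" for t
    unfolding S_def by (rule abs_pt_update[OF i])
  have x_pos: "x i > 0" "x i + S < 1"
    using x i abs_update[of "x i"] by (auto simp: open_simplex_def abs_pt_def)
  have "x(i := t) \<in> open_simplex {..<d} 1" if "dist t (x i) < min (x i) (1 - (x i + S))" for t
    using that x abs_update[of t] unfolding open_simplex_def abs_pt_def
    by (auto simp: dist_real_def abs_less_iff)
  moreover have "min (x i) (1 - (x i + S)) > 0" using x_pos by simp
  ultimately show ?thesis unfolding eventually_nhds_metric by blast
qed

lemma partial_dmons_eval:
  assumes f: "\<forall>y\<in>open_simplex {..<d} 1. f y = dmons_eval d T y"
    and i: "i < d" and x: "x \<in> open_simplex {..<d} 1"
  shows "partial i f x = dmons_eval d (dmons_deriv i T) x"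
proof -
  have "deriv (\<lambda>t. f (x(i := t))) (x i) = deriv (\<lambda>t. dmons_eval d T (x(i := t))) (x i)"
    using eventually_update_in_open_simplex[OF x i] f
    by (intro deriv_cong_ev) (auto elim: eventually_mono)
  also have "\<dots> = dmons_eval d (dmons_deriv i T) x"
    by (rule DERIV_imp_deriv[OF has_real_derivative_dmons_eval[OF x i]])
  finally show ?thesis by (simp add: partial_def)
qed

lemma foldr_partial_dmons_eval:
  assumes "set is \<subseteq> {..<d}" "\<forall>y\<in>open_simplex {..<d} 1. f y = dmons_eval d T y"
  shows "\<forall>y\<in>open_simplex {..<d} 1. foldr partial is f y = dmons_eval d (dmons_derivs is T) y"
  using assms by (induction "is") (auto intro: partial_dmons_eval)

definition partial_word :: "nat \<Rightarrow> (nat \<Rightarrow> nat) \<Rightarrow> nat list" where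
  "partial_word d n = concat (map (\<lambda>i. replicate (n i) i) [0..<d])"

lemma iter_partial_eq_foldr: "iter_partial d n f = foldr partial (partial_word d n) f"
proof -
  have "foldr (\<lambda>i g. (partial i ^^ n i) g) is f = foldr partial (concat (map (\<lambda>i. replicate (n i) i) is)) f"
    for "is" by (induction "is") (simp_all add: foldr_replicate)
  then show ?thesis unfolding iter_partial_def partial_word_def .
qed

lemma set_partial_word: "set (partial_word d n) \<subseteq> {..<d}"
  by (auto simp: partial_word_def)

lemma count_partial_word: "l < d \<Longrightarrow> count (mset (partial_word d n)) l = n l"
proof -
  have "count (mset (concat (map (\<lambda>i. replicate (n i) i) is))) l = (if l \<in> set is then n l else 0)"
    if "distinct is" for "is" using that by (induction "is") auto
  then show "l < d \<Longrightarrow> ?thesis" by (simp add: partial_word_def)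
qed

lemma length_partial_word: "length (partial_word d n) = (\<Sum>l<d. n l)"
  by (induction d) (auto simp: partial_word_def)

definition rodrigues_dmons :: "nat \<Rightarrow> (nat \<Rightarrow> real) \<Rightarrow> (nat \<Rightarrow> nat) \<Rightarrow> dmon list" where
  "rodrigues_dmons d g n =
     dmons_derivs (partial_word d n) [(1, \<lambda>l. g l + real (n l), g d + real (\<Sum>l<d. n l))]"

lemma rodrigues_eq_dmons_eval:
  assumes "x \<in> open_simplex {..<d} 1"
  shows "rodrigues d g n x
       = (\<Prod>i<d. x i powr (- g i)) * (1 - abs_pt d x) powr (- g d) * dmons_eval d (rodrigues_dmons d g n) x"
proof -
  let ?f = "\<lambda>y. (\<Prod>i<d. y i powr (g i + real (n i))) * (1 - abs_pt d y) powr (g d + real (\<Sum>i<d. n i))"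
  have "\<forall>y\<in>open_simplex {..<d} 1. ?f y = dmons_eval d [(1, \<lambda>l. g l + real (n l), g d + real (\<Sum>i<d. n i))] y"
    by simp
  from foldr_partial_dmons_eval[OF set_partial_word this] assms show ?thesis
    unfolding rodrigues_def iter_partial_eq_foldr rodrigues_dmons_def by simp
qed

text \<open>On the boundary of the simplex some factor \<open>x\<^sub>l powr (- g l)\<close> or \<open>(1 - |x|) powr (- g d)\<close>
  has base \<open>0\<close>, and \<open>0 powr a = 0\<close>.\<close>
lemma rodrigues_eq_0_on_boundary:
  assumes "x \<in> std_simplex d" "x \<notin> open_simplex {..<d} 1"
  shows "rodrigues d g n x = 0"
proof -
  from assms have "(\<exists>l<d. x l = 0) \<or> abs_pt d x = 1"
    by (force simp: std_simplex_def open_simplex_def abs_pt_def)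
  then show ?thesis by (auto simp: rodrigues_def prod_zero_iff)
qed

lemma has_bochner_integral_dmon:
  assumes "((\<forall>l<d. e l > -1) \<and> b > -1) \<or> c = 0"
  shows "has_bochner_integral (lebesgue_d d)
           (\<lambda>x. indicator (open_simplex {..<d} 1) x * dmon_eval d (c, e, b) x) (dmon_integral d (c, e, b))"
proof (cases "c = 0")
  case False
  with assms have e: "\<forall>l<d. e l > -1" and b: "b > -1" by auto
  have "(\<integral>\<^sup>+x. ennreal (dirichlet_density {..<d} e b 1 x) \<partial>lebesgue_d d) = ennreal (dirichlet_const {..<d} e b)"
    using nn_integral_dirichlet[of "{..<d}" e b 1] e b by simp
  moreover have "dirichlet_const {..<d} e b \<ge> 0" using e b by (intro dirichlet_const_nonneg) auto
  ultimately have "has_bochner_integral (lebesgue_d d) (dirichlet_density {..<d} e b 1) (dirichlet_const {..<d} e b)"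
    by (intro has_bochner_integral_nn_integral) (auto simp: dirichlet_density_nonneg)
  from has_bochner_integral_mult_right[OF this, of c] show ?thesis
    by (simp add: dirichlet_density_def abs_pt_def mult_ac)
qed (simp add: has_bochner_integral_zero)

lemma has_bochner_integral_dmons:
  assumes "\<forall>(c, e, b)\<in>set T. ((\<forall>l<d. e l > -1) \<and> b > -1) \<or> c = 0"
  shows "has_bochner_integral (lebesgue_d d)
           (\<lambda>x. indicator (open_simplex {..<d} 1) x * dmons_eval d T x) (dmons_integral d T)"
  using assms
proof (induction T)
  case (Cons t T)
  obtain c e b where t: "t = (c, e, b)" by (cases t)
  have "has_bochner_integral (lebesgue_d d)
      (\<lambda>x. indicator (open_simplex {..<d} 1) x * dmon_eval d t x
           + indicator (open_simplex {..<d} 1) x * dmons_eval d T x) (dmon_integral d t + dmons_integral d T)"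
    using Cons has_bochner_integral_dmon[of d e b c] t by (intro has_bochner_integral_add) auto
  then show ?case by (simp add: algebra_simps)
qed (simp add: has_bochner_integral_zero)


section \<open>Orthogonality\<close>

lemma rodrigues_dmons_exponents_ge:
  assumes "(c, e, b) \<in> set (rodrigues_dmons d g n)"
  shows "(\<forall>l<d. e l \<ge> g l) \<and> b \<ge> g d"
proof -
  note bounds = dmons_derivs_exponent_bounds[OF assms[unfolded rodrigues_dmons_def]]
  have "e l \<ge> g l" if "l < d" for l
    using bounds[THEN conjunct1, rule_format, of l] count_partial_word[OF that] by simp
  then show ?thesis using bounds by (simp add: length_partial_word)
qed

text \<open>The exponents of \<open>x^\<alpha> * x^(-g) * (\<Prod>l\<in>A. x l powr g l)\<close> when \<open>g l = - \<mu> l\<close> for \<open>l \<notin> A\<close>.\<close>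
definition weighted_exponent :: "nat set \<Rightarrow> (nat \<Rightarrow> nat) \<Rightarrow> (nat \<Rightarrow> nat) \<Rightarrow> nat \<Rightarrow> real" where
  "weighted_exponent A \<mu> \<alpha> l = real (\<alpha> l + (if l \<in> A then 0 else \<mu> l))"

lemma rodrigues_mult_monomial_eq_dmons_eval:
  assumes "A \<subseteq> {..<d}" "\<forall>l<d. l \<notin> A \<longrightarrow> g l = - real (\<mu> l)" "g d = - real M"
    and x: "x \<in> open_simplex {..<d} 1"
  shows "rodrigues d g n x * (\<Prod>l<d. x l ^ \<alpha> l) * (\<Prod>l\<in>A. x l powr g l)
       = dmons_eval d (dmons_mult [(1, weighted_exponent A \<mu> \<alpha>, real M)] (rodrigues_dmons d g n)) x"
proof -
  have "x l powr weighted_exponent A \<mu> \<alpha> l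
      = x l ^ \<alpha> l * x l powr (- g l) * (if l \<in> A then x l powr g l else 1)" if "l < d" for l
  proof -
    have xl: "x l > 0" using x that by (auto simp: open_simplex_def)
    then have "x l powr (- g l) * (if l \<in> A then x l powr g l else 1) = x l ^ (if l \<in> A then 0 else \<mu> l)"
      using assms(2) that by (cases "l \<in> A") (simp_all add: powr_add[symmetric] powr_realpow)
    moreover have "x l powr weighted_exponent A \<mu> \<alpha> l = x l ^ \<alpha> l * x l ^ (if l \<in> A then 0 else \<mu> l)"
      unfolding weighted_exponent_def powr_realpow[OF xl] power_add ..
    ultimately show ?thesis by (simp only: mult.assoc)
  qed
  then have monomial: "(\<Prod>l<d. x l powr weighted_exponent A \<mu> \<alpha> l)
      = (\<Prod>l<d. x l ^ \<alpha> l) * (\<Prod>l<d. x l powr (- g l)) * (\<Prod>l\<in>A. x l powr g l)"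
    using assms(1) by (simp add: prod.distrib prod.If_cases Int_absorb1)
  define E where "E = dmons_eval d (rodrigues_dmons d g n) x"
  have "rodrigues d g n x = (\<Prod>l<d. x l powr (- g l)) * (1 - abs_pt d x) powr real M * E"
    using rodrigues_eq_dmons_eval[OF x] assms(3) by (simp add: E_def)
  moreover have "dmons_eval d (dmons_mult [(1, weighted_exponent A \<mu> \<alpha>, real M)] (rodrigues_dmons d g n)) x
      = (\<Prod>l<d. x l powr weighted_exponent A \<mu> \<alpha> l) * (1 - abs_pt d x) powr real M * E"
    by (simp add: dmons_eval_mult_single E_def)
  ultimately show ?thesis unfolding monomial by (simp only: ac_simps)
qed

lemma has_bochner_integral_rodrigues_dmons_mult:
  assumes A: "A \<subseteq> {..<d}" and g_A: "\<forall>l\<in>A. g l > -1"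
    and g_int: "\<forall>l<d. l \<notin> A \<longrightarrow> g l = - real (\<mu> l)" and g_d: "g d = - real M"
    and deg: "(\<Sum>l<d. \<alpha> l) + (\<Sum>l\<in>{..<d}-A. \<mu> l) + M < (\<Sum>l<d. n l)"
  shows "has_bochner_integral (lebesgue_d d)
     (\<lambda>x. indicator (open_simplex {..<d} 1) x
          * dmons_eval d (dmons_mult [(1, weighted_exponent A \<mu> \<alpha>, real M)] (rodrigues_dmons d g n)) x) 0"
proof -
  let ?\<rho> = "weighted_exponent A \<mu> \<alpha>"
  have "(\<Sum>l<d. (if l \<in> A then 0 else \<mu> l)) = (\<Sum>l\<in>{..<d}-A. \<mu> l)"
    by (simp add: sum.If_cases Diff_eq)
  then have "(\<Sum>l<d. ?\<rho> l) = real (\<Sum>l<d. \<alpha> l) + real (\<Sum>l\<in>{..<d}-A. \<mu> l)"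
    unfolding weighted_exponent_def of_nat_sum[symmetric] sum.distrib by simp
  then have "(\<Sum>l<d. ?\<rho> l) + real M < real (\<Sum>l<d. n l)"
    using deg by linarith
  then have "dmons_integral d (dmons_mult (dmons_derivs [] [(1, ?\<rho>, real M)]) (rodrigues_dmons d g n)) = 0"
    unfolding rodrigues_dmons_def using g_A g_int g_d
    by (intro dmons_integral_mult_derivs_eq_0)
       (auto simp: weighted_exponent_def set_partial_word count_partial_word length_partial_word)
  then have zero: "dmons_integral d (dmons_mult [(1, ?\<rho>, real M)] (rodrigues_dmons d g n)) = 0"
    by simp
  have integrable: "\<forall>(c, e, b)\<in>set (dmons_mult [(1, ?\<rho>, real M)] (rodrigues_dmons d g n)).
      ((\<forall>l<d. e l > -1) \<and> b > -1) \<or> c = 0"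
  proof (clarsimp simp: set_dmons_mult)
    fix c' e' b' assume t: "(c', e', b') \<in> set (rodrigues_dmons d g n)"
    note e'_ge = rodrigues_dmons_exponents_ge[OF t]
    have "?\<rho> l + e' l > -1" if "l < d" for l
      using e'_ge g_A g_int that by (cases "l \<in> A") (force simp: weighted_exponent_def)+
    moreover have "real M + b' > -1" using e'_ge g_d by simp
    ultimately show "(\<forall>l<d. ?\<rho> l + e' l > -1) \<and> real M + b' > -1" by blast
  qed
  from has_bochner_integral_dmons[OF integrable] show ?thesis
    unfolding zero .
qed

theorem rodrigues_orthogonal_to_low_degree:
  fixes g :: "nat \<Rightarrow> real" and \<mu> n :: "nat \<Rightarrow> nat" and M :: nat
    and Q :: "(nat \<Rightarrow> real) \<Rightarrow> real"
  assumes A: "A \<subseteq> {..<d}" and g_A: "\<forall>l\<in>A. g l > -1"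
    and g_int: "\<forall>l<d. l \<notin> A \<longrightarrow> g l = - real (\<mu> l)" and g_d: "g d = - real M"
    and Q: "Q \<in> poly_space d (int (\<Sum>l<d. n l) - int (\<Sum>l\<in>{..<d}-A. \<mu> l) - int M - 1)"
  shows "has_bochner_integral (lebesgue_d d)
     (\<lambda>x. indicator (std_simplex d) x * (rodrigues d g n x * Q x * (\<Prod>l\<in>A. x l powr g l))) 0"
proof -
  define S where "S = {\<alpha>. (\<forall>i. d \<le> i \<longrightarrow> \<alpha> i = 0)
    \<and> int (\<Sum>i<d. \<alpha> i) \<le> int (\<Sum>l<d. n l) - int (\<Sum>l\<in>{..<d}-A. \<mu> l) - int M - 1}"
  from Q obtain c where Q_eq: "Q = (\<lambda>x. \<Sum>\<alpha>\<in>S. c \<alpha> * (\<Prod>i<d. x i ^ \<alpha> i))"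
    unfolding poly_space_def S_def by blast
  let ?T = "\<lambda>\<alpha>. dmons_mult [(1, weighted_exponent A \<mu> \<alpha>, real M)] (rodrigues_dmons d g n)"
  let ?W = "\<lambda>x. \<Prod>l\<in>A. x l powr g l"
  have "indicator (std_simplex d) x * (rodrigues d g n x * Q x * ?W x)
      = (\<Sum>\<alpha>\<in>S. c \<alpha> * (indicator (open_simplex {..<d} 1) x * dmons_eval d (?T \<alpha>) x))" for x
  proof (cases "x \<in> open_simplex {..<d} 1")
    case True
    then have "x \<in> std_simplex d" by (auto simp: open_simplex_def std_simplex_def abs_pt_def less_imp_le)
    have "rodrigues d g n x * Q x * ?W x = (\<Sum>\<alpha>\<in>S. c \<alpha> * (rodrigues d g n x * (\<Prod>i<d. x i ^ \<alpha> i) * ?W x))"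
      unfolding Q_eq by (simp add: sum_distrib_left sum_distrib_right mult_ac)
    also have "\<dots> = (\<Sum>\<alpha>\<in>S. c \<alpha> * dmons_eval d (?T \<alpha>) x)"
      using rodrigues_mult_monomial_eq_dmons_eval[OF A g_int g_d True] by simp
    finally show ?thesis using True \<open>x \<in> std_simplex d\<close> by simp
  next
    case False
    then show ?thesis by (cases "x \<in> std_simplex d") (simp_all add: rodrigues_eq_0_on_boundary)
  qed
  moreover have "(\<Sum>l<d. \<alpha> l) + (\<Sum>l\<in>{..<d}-A. \<mu> l) + M < (\<Sum>l<d. n l)" if "\<alpha> \<in> S" for \<alpha>
  proof -
    have "int (\<Sum>i<d. \<alpha> i) \<le> int (\<Sum>l<d. n l) - int (\<Sum>l\<in>{..<d}-A. \<mu> l) - int M - 1"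
      using that by (simp add: S_def del: of_nat_sum)
    then show ?thesis by linarith
  qed
  then have "has_bochner_integral (lebesgue_d d)
      (\<lambda>x. \<Sum>\<alpha>\<in>S. c \<alpha> * (indicator (open_simplex {..<d} 1) x * dmons_eval d (?T \<alpha>) x)) (\<Sum>\<alpha>\<in>S. c \<alpha> * 0)"
    by (intro has_bochner_integral_sum has_bochner_integral_mult_right
        has_bochner_integral_rodrigues_dmons_mult[OF A g_A g_int g_d])
  ultimately show ?thesis by simp
qed

theorem lemma2p3:
  fixes d k :: nat and \<gamma> :: "nat \<Rightarrow> real" and m n :: "nat \<Rightarrow> nat"
    and Q :: "(nat \<Rightarrow> real) \<Rightarrow> real"
  assumes "1 \<le> d" and "1 \<le> k" and "k \<le> d"
    and "\<forall>i\<le>d - k. \<gamma> i > -1"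
    and "\<forall>i<k. 0 < m i"
    and "Q \<in> poly_space d (int (\<Sum>i<d. n i) - int (\<Sum>i<k. m i) - 1)"
  shows "set_integrable (lebesgue_d d) (std_simplex d)
           (\<lambda>x. rodrigues d (concat_param d k \<gamma> m) n x * Q x * (\<Prod>i\<le>d - k. x i powr \<gamma> i))
       \<and> (LINT x:std_simplex d|lebesgue_d d.
            rodrigues d (concat_param d k \<gamma> m) n x * Q x * (\<Prod>i\<le>d - k. x i powr \<gamma> i)) = 0"
proof -
  define A where "A = {..d - k}"
  define \<mu> where "\<mu> l = m (l - (d - k + 1))" for l
  let ?g = "concat_param d k \<gamma> m"
  have A: "A \<subseteq> {..<d}" using assms(2,3) by (auto simp: A_def)
  have g_A: "\<forall>l\<in>A. ?g l > -1" using assms(4) by (simp add: A_def concat_param_def)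
  have g_int: "\<forall>l<d. l \<notin> A \<longrightarrow> ?g l = - real (\<mu> l)" by (simp add: A_def \<mu>_def concat_param_def)
  have "\<not> d \<le> d - k" "d - (d - k + 1) = k - 1" using assms(1-3) by auto
  then have g_d: "?g d = - real (m (k - 1))" by (simp add: concat_param_def)
  have "{..<d} - A = {0 + (d - k + 1)..<(k - 1) + (d - k + 1)}" using assms(2,3) by (auto simp: A_def)
  then have "(\<Sum>l\<in>{..<d}-A. \<mu> l) = (\<Sum>j<k - 1. m j)"
    by (simp only: sum.shift_bounds_nat_ivl) (simp add: \<mu>_def atLeast0LessThan)
  then have "int (\<Sum>i<k. m i) = int (\<Sum>l\<in>{..<d}-A. \<mu> l) + int (m (k - 1))"
    using assms(2) by (cases k) simp_all
  then have "Q \<in> poly_space d (int (\<Sum>l<d. n l) - int (\<Sum>l\<in>{..<d}-A. \<mu> l) - int (m (k - 1)) - 1)"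
    using assms(6) by (simp add: algebra_simps)
  moreover have "(\<Prod>l\<in>A. x l powr ?g l) = (\<Prod>i\<le>d - k. x i powr \<gamma> i)" for x
    unfolding A_def by (rule prod.cong) (simp_all add: concat_param_def)
  ultimately have "has_bochner_integral (lebesgue_d d) (\<lambda>x. indicator (std_simplex d) x
      * (rodrigues d ?g n x * Q x * (\<Prod>i\<le>d - k. x i powr \<gamma> i))) 0"
    using rodrigues_orthogonal_to_low_degree[OF A g_A g_int g_d] by simp
  then show ?thesis
    unfolding set_integrable_def set_lebesgue_integral_def has_bochner_integral_iff by simp
qed

end
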